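(* Let $n>1$ and let $\mathbf M_n=(M_n,\vee,\wedge,0,1)$ be the lattice with $M_n=\{0,a_1,\dots,a_n,1\}$, where $a_1,\dots,a_n$ are pairwise incomparable atoms and coatoms. Then for all $a,b,c\in M_n$: $a\wedge b\le c$ if and only if $\{a\}\le_1 b\to c$.
   Context: For $a\in L$, $a^+:=\{x\in L\mid a\vee x=1,\ a\wedge x=0\}$ (the set of all complements of $a$). For $a,b\in L$, $a\to b:=\{x\vee(a\wedge b)\mid x\in a^+\}$. For $A,B\subseteq L$, $A\le_1B$ means that for every $x\in A$ there exists $y\in B$ with $x\le y$. *)

theory Defs
  imports Main
begin

text \<open>The lattice M_n: elements 0 (Bot), atoms a_1..a_n (At i, 1 \<le> i \<le> n), 1 (Top).
  The operations below are defined on the whole datatype; the carrier of M_n is Mn n.\<close>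

datatype mn = Bot | At nat | Top

definition Mn :: "nat \<Rightarrow> mn set" where
  "Mn n = {Bot, Top} \<union> At ` {1..n}"

fun mle :: "mn \<Rightarrow> mn \<Rightarrow> bool" where
  "mle Bot _ = True"
| "mle _ Top = True"
| "mle (At i) (At j) = (i = j)"
| "mle _ _ = False"

fun mjoin :: "mn \<Rightarrow> mn \<Rightarrow> mn" where
  "mjoin Bot y = y"
| "mjoin x Bot = x"
| "mjoin (At i) (At j) = (if i = j then At i else Top)"
| "mjoin _ _ = Top"

fun mmeet :: "mn \<Rightarrow> mn \<Rightarrow> mn" where
  "mmeet Top y = y"
| "mmeet x Top = x"
| "mmeet (At i) (At j) = (if i = j then At i else Bot)"
| "mmeet _ _ = Bot"

definition compl_set :: "nat \<Rightarrow> mn \<Rightarrow> mn set" where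
  "compl_set n a = {x \<in> Mn n. mjoin a x = Top \<and> mmeet a x = Bot}"

definition arrow :: "nat \<Rightarrow> mn \<Rightarrow> mn \<Rightarrow> mn set" where
  "arrow n a b = {mjoin x (mmeet a b) | x. x \<in> compl_set n a}"

definition le1 :: "mn set \<Rightarrow> mn set \<Rightarrow> bool" where
  "le1 A B \<longleftrightarrow> (\<forall>x\<in>A. \<exists>y\<in>B. mle x y)"

end

theory Submission
  imports Defs
begin

text \<open>If some complement x of b gives a \<le> x \<or> (b \<and> c), then modularity yields
  a \<and> b \<le> (x \<or> (b \<and> c)) \<and> b = (x \<and> b) \<or> (b \<and> c) = b \<and> c \<le> c; this direction holds in
  any modular lattice.  Conversely, let a \<and> b \<le> c.  If b \<le> c then x \<or> (b \<and> c) = 1 for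
  every complement x of b, and complements exist because n > 1.  If b = 1 its only
  complement is 0 and the claim is a \<le> c.  Otherwise b is an atom with b \<and> c = 0, so
  a \<and> b = 0, and every element of M_n disjoint from an atom lies below some other atom.\<close>

lemma compl_set_Bot [simp]: "compl_set n Bot = {Top}"
  unfolding compl_set_def Mn_def by (auto elim: mjoin.elims)

lemma compl_set_Top [simp]: "compl_set n Top = {Bot}"
  unfolding compl_set_def Mn_def by (auto elim: mmeet.elims)

lemma compl_set_At [simp]: "compl_set n (At i) = At ` ({1..n} - {i})"
  unfolding compl_set_def Mn_def by (rule set_eqI) (case_tac x; auto)

lemma le1_singleton_arrow_iff:
  "le1 {a} (arrow n b c) \<longleftrightarrow> (\<exists>x\<in>compl_set n b. mle a (mjoin x (mmeet b c)))"
  by (auto simp: le1_def arrow_def)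

lemma mle_trans [trans]: "mle x y \<Longrightarrow> mle y z \<Longrightarrow> mle x z"
  by (cases x; cases y; cases z) auto

lemma mmeet_commute: "mmeet x y = mmeet y x"
  by (cases x; cases y) auto

lemma mmeet_le_left: "mle (mmeet x y) x"
  by (cases x; cases y) auto

lemma mmeet_le_right: "mle (mmeet x y) y"
  by (cases x; cases y) auto

lemma mmeet_mono_left: "mle x x' \<Longrightarrow> mle (mmeet x y) (mmeet x' y)"
  by (cases x; cases x'; cases y) auto

lemma mjoin_Bot_right [simp]: "mjoin x Bot = x"
  by (cases x) auto

lemma mjoin_Top_left [simp]: "mjoin Top x = Top"
  by (cases x) auto

lemma mmeet_Top_right [simp]: "mmeet x Top = x"
  by (cases x) auto

lemma mle_Top [simp]: "mle x Top"
  by (cases x) auto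

lemma mmeet_mjoin_modular: "mle z y \<Longrightarrow> mmeet (mjoin x z) y = mjoin (mmeet x y) z"
  by (cases x; cases y; cases z) auto

lemma exists_other_index: "1 < n \<Longrightarrow> \<exists>j\<in>{1..n}. j \<noteq> (i::nat)"
  by (rule bexI[of _ "if i = 1 then 2 else 1"]) auto

lemma meet_le_of_le_arrow_elem:
  assumes x: "x \<in> compl_set n b" and a: "mle a (mjoin x (mmeet b c))"
  shows "mle (mmeet a b) c"
proof -
  have "mmeet x b = Bot" using x by (simp add: compl_set_def mmeet_commute)
  have "mle (mmeet a b) (mmeet (mjoin x (mmeet b c)) b)"
    using a by (rule mmeet_mono_left)
  also have "mmeet (mjoin x (mmeet b c)) b = mjoin (mmeet x b) (mmeet b c)"
    by (rule mmeet_mjoin_modular[OF mmeet_le_left])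
  also have "\<dots> = mmeet b c"
    using \<open>mmeet x b = Bot\<close> by simp
  also have "mle (mmeet b c) c"
    by (rule mmeet_le_right)
  finally show ?thesis .
qed

lemma below_compl_of_disjoint_At:
  assumes "1 < n" "a \<in> Mn n" "mmeet a (At i) = Bot"
  shows "\<exists>x\<in>compl_set n (At i). mle a x"
proof (cases a)
  case Bot
  then show ?thesis using exists_other_index[OF \<open>1 < n\<close>, of i] by auto
next
  case (At k)
  then have "k \<in> {1..n}" "k \<noteq> i"
    using assms(2,3) by (auto simp: Mn_def split: if_splits)
  with At show ?thesis by (intro bexI[of _ "At k"]) auto
qed (use assms(3) in simp)

lemma le_arrow_elem_of_meet_le:
  assumes "1 < n" "a \<in> Mn n" "mle (mmeet a b) c"
  shows "\<exists>x\<in>compl_set n b. mle a (mjoin x (mmeet b c))"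
proof (cases b)
  case Bot
  then show ?thesis by simp
next
  case Top
  then show ?thesis using assms(3) by simp
next
  case (At i)
  show ?thesis
  proof (cases "mle (At i) c")
    case True
    then have "mmeet b c = At i" using At by (cases c) auto
    with At show ?thesis using exists_other_index[OF \<open>1 < n\<close>, of i] by auto
  next
    case False
    then have "mmeet b c = Bot" using At by (cases c) auto
    moreover have "mmeet a (At i) = Bot"
      using assms(3) False At by (cases a; cases c) auto
    then obtain x where "x \<in> compl_set n b" "mle a x"
      using below_compl_of_disjoint_At[OF \<open>1 < n\<close> \<open>a \<in> Mn n\<close>] At by blast
    ultimately show ?thesis by auto
  qed
qed

theorem proposition5:
  fixes n :: nat
  assumes "n > 1"
  shows "\<forall>a\<in>Mn n. \<forall>b\<in>Mn n. \<forall>c\<in>Mn n.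
           mle (mmeet a b) c \<longleftrightarrow> le1 {a} (arrow n b c)"
  unfolding le1_singleton_arrow_iff
  using le_arrow_elem_of_meet_le[OF assms] meet_le_of_le_arrow_elem by blast

end
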